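(* For $A,x\in\mathbb{R}$ define $E_0(A,x):=1$, $E_1(A,x):=e^{(1-x)A}$ and, for $n\ge2$, \[ E_n(A,x):=\begin{cases} \exp\!\Big(\big[x(E_1+E_3+\cdots+E_{n-1})-\tfrac n2\big]A\Big), & n \text{ even},\\[4pt] \exp\!\Big(\big[\tfrac{n+1}{2}-x(E_0+E_2+\cdots+E_{n-1})\big]A\Big), & n\text{ odd},\end{cases} \] with all $E_j$ evaluated at $(A,x)$. Define $\varphi_1(A,x):=x-1$, $\varphi_n(A,x):=\varphi_{n-1}(A,x)-1+xE_{n-1}(A,x)$ for $n\ge2$, and the polynomial $p_n(A):=\frac{\partial\varphi_n}{\partial x}(A,1)$. Then for every integer $n\ge1$, $\deg p_n=n-1$; moreover the leading coefficient of $p_n$ equals $1$ if $n\equiv0$ or $n\equiv1\pmod 4$, and equals $-1$ if $n\equiv2$ or $n\equiv3\pmod4$. *)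

theory Defs
  imports Complex_Main "HOL-Computational_Algebra.Polynomial"
begin

function E :: "real \<Rightarrow> real \<Rightarrow> nat \<Rightarrow> real" where
  "E A x n =
     (if n = 0 then 1
      else if n = 1 then exp ((1 - x) * A)
      else if even n then
        exp ((x * (\<Sum>j\<in>{j. j < n \<and> odd j}. E A x j) - real n / 2) * A)
      else
        exp ((real (n + 1) / 2 - x * (\<Sum>j\<in>{j. j < n \<and> even j}. E A x j)) * A))"
  by pat_completeness auto
termination by (relation "measure (\<lambda>(A, x, n). n)") auto

(* phi A x n = \<phi>_n(A,x), meaningful for n \<ge> 1 *)
fun phi :: "real \<Rightarrow> real \<Rightarrow> nat \<Rightarrow> real" where
  "phi A x 0 = 0"
| "phi A x (Suc 0) = x - 1"
| "phi A x (Suc (Suc m)) = phi A x (Suc m) - 1 + x * E A x (Suc m)"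

end

theory Submission
  imports Defs
begin

text \<open>
  The constants n/2 and (n+1)/2 in the definition of E n are exactly the number of indices
  j < n of parity opposite to n, so by strong induction E A 1 n = 1 and every exponent
  vanishes at x = 1. Hence e n, the x-derivative of E n at x = 1, satisfies
  e n = (-1)^n A ((n+1) div 2 + \<Sum> e j), summed over those j. The summand e (n-1) dominates,
  so e n has degree n and leading coefficient (-1)^n times that of e (n-1), that is
  (-1)^((n+1) div 2). Finally p n = p (n-1) + 1 + e (n-1) is dominated by e (n-1), which gives
  degree n - 1 and leading coefficient (-1)^(n div 2).
\<close>

declare E.simps [simp del]

definition opposite_parity_below :: "nat \<Rightarrow> nat set" where
  "opposite_parity_below n = {j. j < n \<and> odd (n + j)}"

lemma opposite_parity_below_0 [simp]: "opposite_parity_below 0 = {}"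
  by (simp add: opposite_parity_below_def)

lemma opposite_parity_below_Suc_0 [simp]: "opposite_parity_below (Suc 0) = {0}"
  by (auto simp: opposite_parity_below_def)

lemma opposite_parity_below_Suc_Suc:
  "opposite_parity_below (Suc (Suc k)) = insert (Suc k) (opposite_parity_below k)"
  by (auto simp: opposite_parity_below_def less_Suc_eq)

lemma finite_opposite_parity_below [simp]: "finite (opposite_parity_below n)"
  by (simp add: opposite_parity_below_def)

lemma card_opposite_parity_below: "card (opposite_parity_below n) = (n + 1) div 2"
proof (induction n rule: nat_induct2)
  case (step k)
  have "Suc k \<notin> opposite_parity_below k"
    by (simp add: opposite_parity_below_def)
  with step show ?case
    by (simp add: opposite_parity_below_Suc_Suc)
qed simp_all

lemma E_eq_exp:
  "E A x n = exp ((-1) ^ n * A * (x * (\<Sum>j\<in>opposite_parity_below n. E A x j) - real ((n + 1) div 2)))"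
proof -
  have E0: "E A x 0 = 1"
    by (simp add: E.simps)
  consider "n = 0" | "n = 1" | "even n" "n \<noteq> 0" | "odd n" "n \<noteq> 1"
    by blast
  then show ?thesis
  proof cases
    case 3
    then have "opposite_parity_below n = {j. j < n \<and> odd j}"
      by (auto simp: opposite_parity_below_def)
    moreover have "real n = 2 * real ((n + 1) div 2)"
      using 3 by (auto elim!: evenE)
    moreover have "n \<noteq> 1"
      using 3 by auto
    ultimately show ?thesis
      using 3 by (subst E.simps) (simp add: algebra_simps)
  next
    case 4
    then have "opposite_parity_below n = {j. j < n \<and> even j}"
      by (auto simp: opposite_parity_below_def)
    moreover have "real n = 2 * real ((n + 1) div 2) - 1"
      using 4 by (auto elim!: oddE)
    ultimately show ?thesis
      using 4 by (subst E.simps) (simp add: algebra_simps)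
  qed (simp_all add: E0 E.simps algebra_simps)
qed

lemma E_at_1: "E A 1 n = 1"
proof (induction n rule: less_induct)
  case (less n)
  have "\<forall>j\<in>opposite_parity_below n. E A 1 j = 1"
    using less by (simp add: opposite_parity_below_def)
  then have "(\<Sum>j\<in>opposite_parity_below n. E A 1 j) = real ((n + 1) div 2)"
    by (simp add: card_opposite_parity_below)
  then show ?case
    by (subst E_eq_exp) simp
qed

lemma DERIV_exp_mult_x_at_1:
  fixes S :: "real \<Rightarrow> real"
  assumes "(S has_real_derivative D) (at 1)"
  shows "((\<lambda>x. exp (a * (x * S x - S 1))) has_real_derivative a * (S 1 + D)) (at 1)"
  by (rule assms derivative_eq_intros refl | simp)+

function dE :: "nat \<Rightarrow> real poly" where
  "dE n = smult ((-1) ^ n) (pCons 0 ([:real ((n + 1) div 2):] + (\<Sum>j\<in>opposite_parity_below n. dE j)))"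
  by pat_completeness auto
termination
  by (relation "measure id") (auto simp: opposite_parity_below_def)

declare dE.simps [simp del]

lemma E_has_derivative_dE: "((\<lambda>x. E A x n) has_real_derivative poly (dE n) A) (at 1)"
proof (induction n rule: less_induct)
  case (less n)
  define S where "S x = (\<Sum>j\<in>opposite_parity_below n. E A x j)" for x
  define D where "D = (\<Sum>j\<in>opposite_parity_below n. poly (dE j) A)"
  have S_1: "S 1 = real ((n + 1) div 2)"
    by (simp add: S_def E_at_1 card_opposite_parity_below)
  have "(S has_real_derivative D) (at 1)"
    unfolding S_def D_def using less by (intro DERIV_sum) (auto simp: opposite_parity_below_def)
  then have "((\<lambda>x. exp ((-1) ^ n * A * (x * S x - S 1))) has_real_derivative (-1) ^ n * A * (S 1 + D)) (at 1)"
    by (rule DERIV_exp_mult_x_at_1)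
  moreover have "(\<lambda>x. E A x n) = (\<lambda>x. exp ((-1) ^ n * A * (x * S x - S 1)))"
    unfolding S_1 by (subst E_eq_exp) (simp add: S_def)
  moreover have "poly (dE n) A = (-1) ^ n * A * (S 1 + D)"
    by (subst dE.simps) (simp add: S_1 D_def poly_sum algebra_simps)
  ultimately show ?case
    by simp
qed

lemma dE_0 [simp]: "dE 0 = 0"
  by (subst dE.simps) simp

lemma dE_Suc_0: "dE (Suc 0) = [:0, -1:]"
  by (subst dE.simps) simp

lemma dE_Suc_Suc:
  "dE (Suc (Suc k)) = smult ((-1) ^ k) (pCons 0
     ([:real ((Suc (Suc k) + 1) div 2):] + (\<Sum>j\<in>opposite_parity_below k. dE j) + dE (Suc k)))"
proof -
  have "Suc k \<notin> opposite_parity_below k"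
    by (simp add: opposite_parity_below_def)
  then show ?thesis
    by (subst dE.simps) (simp add: opposite_parity_below_Suc_Suc algebra_simps)
qed

lemma degree_dE_le: "degree (dE n) \<le> n"
proof (induction n rule: less_induct)
  case (less n)
  show ?case
  proof (cases n)
    case (Suc m)
    have "degree ([:real ((n + 1) div 2):] + (\<Sum>j\<in>opposite_parity_below n. dE j)) \<le> m"
      using Suc by (intro degree_add_le degree_sum_le)
        (auto simp: opposite_parity_below_def less_Suc_eq_le intro: order.trans[OF less.IH])
    then show ?thesis
      using Suc by (subst dE.simps) (auto intro: order.trans[OF degree_pCons_le])
  qed simp
qed

lemma minus_one_power_Suc_Suc_div_2:
  "(-1) ^ k * (-1) ^ (Suc (Suc k) div 2) = ((-1) ^ (Suc (Suc (Suc k)) div 2) :: 'a :: ring_1)"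
  by (simp add: minus_one_power_iff)

lemma degree_and_lead_coeff_dE:
  "degree (dE (Suc k)) = Suc k \<and> lead_coeff (dE (Suc k)) = (-1) ^ (Suc (Suc k) div 2)"
proof (induction k)
  case 0
  then show ?case
    by (simp add: dE_Suc_0)
next
  case (Suc k)
  define r where "r = [:real ((Suc (Suc k) + 1) div 2):] + (\<Sum>j\<in>opposite_parity_below k. dE j)"
  have "degree r \<le> k"
    unfolding r_def by (intro degree_add_le degree_sum_le)
      (auto simp: opposite_parity_below_def intro: order.trans[OF degree_dE_le])
  then have r_less: "degree r < degree (dE (Suc k))"
    using Suc.IH by simp
  have deg: "degree (r + dE (Suc k)) = Suc k"
    using degree_add_eq_right[OF r_less] Suc.IH by simp
  then have nonzero: "r + dE (Suc k) \<noteq> 0"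
    by auto
  have unfold: "dE (Suc (Suc k)) = smult ((-1) ^ k) (pCons 0 (r + dE (Suc k)))"
    unfolding r_def by (rule dE_Suc_Suc)
  have "degree (dE (Suc (Suc k))) = Suc (Suc k)"
    unfolding unfold degree_smult_eq degree_pCons_eq[OF nonzero] deg by simp
  moreover have "lead_coeff (dE (Suc (Suc k))) = (-1) ^ k * lead_coeff (dE (Suc k))"
    unfolding unfold lead_coeff_smult lead_coeff_pCons(1)[OF nonzero] lead_coeff_add_le[OF r_less] ..
  ultimately show ?case
    using Suc.IH minus_one_power_Suc_Suc_div_2 by metis
qed

fun dphi :: "nat \<Rightarrow> real poly" where
  "dphi 0 = 0"
| "dphi (Suc 0) = 1"
| "dphi (Suc (Suc m)) = dphi (Suc m) + 1 + dE (Suc m)"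

lemma phi_has_derivative_dphi: "((\<lambda>x. phi A x n) has_real_derivative poly (dphi n) A) (at 1)"
proof (induction n rule: dphi.induct)
  case (3 m)
  have "((\<lambda>x. phi A x (Suc m) - 1 + x * E A x (Suc m)) has_real_derivative
          poly (dphi (Suc m)) A - 0 + (1 * E A 1 (Suc m) + poly (dE (Suc m)) A * 1)) (at 1)"
    by (intro DERIV_add DERIV_diff DERIV_mult 3 E_has_derivative_dE DERIV_ident DERIV_const)
  then show ?case
    by (simp add: E_at_1 algebra_simps)
qed (auto intro!: derivative_eq_intros)

lemma degree_and_lead_coeff_dphi:
  "degree (dphi (Suc n)) = n \<and> lead_coeff (dphi (Suc n)) = (-1) ^ (Suc n div 2)"
proof (induction n)
  case (Suc n)
  have "degree (dphi (Suc n) + 1) \<le> n"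
    using Suc.IH by (intro degree_add_le) auto
  then have less: "degree (dphi (Suc n) + 1) < degree (dE (Suc n))"
    using degree_and_lead_coeff_dE[of n] by simp
  show ?case
    unfolding dphi.simps(3) lead_coeff_add_le[OF less] unfolding degree_add_eq_right[OF less]
    by (rule degree_and_lead_coeff_dE)
qed simp

lemma minus_one_power_div_2:
  "(-1) ^ (n div 2) = (if n mod 4 = 0 \<or> n mod 4 = 1 then 1 else (-1 :: 'a :: linordered_idom))"
proof -
  have "even (n div 2) \<longleftrightarrow> n mod 4 = 0 \<or> n mod 4 = 1"
    by presburger
  then show ?thesis
    by (simp add: minus_one_power_iff)
qed

theorem lemma4p5:
  fixes n :: nat
  assumes "n \<ge> 1"
  shows "\<exists>p :: real poly.
           (\<forall>A. ((\<lambda>x. phi A x n) has_real_derivative poly p A) (at 1)) \<and>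
           degree p = n - 1 \<and>
           lead_coeff p = (if n mod 4 = 0 \<or> n mod 4 = 1 then 1 else -1)"
proof (intro exI conjI allI)
  obtain m where n: "n = Suc m"
    using assms by (cases n) auto
  show "((\<lambda>x. phi A x n) has_real_derivative poly (dphi n) A) (at 1)" for A
    by (rule phi_has_derivative_dphi)
  show "degree (dphi n) = n - 1"
    using degree_and_lead_coeff_dphi[of m] n by simp
  have "lead_coeff (dphi n) = (-1) ^ (n div 2)"
    unfolding n using degree_and_lead_coeff_dphi[of m] by (rule conjunct2)
  then show "lead_coeff (dphi n) = (if n mod 4 = 0 \<or> n mod 4 = 1 then 1 else -1)"
    by (simp only: minus_one_power_div_2)
qed

end
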